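(* Local search based on the 1-norm of the inverse has no constant approximation ratio for full row rank matrices: for all integers $r\ge2$ and $n\ge 2r$ and every $K>0$, there exist a matrix $A\in\mathbb{R}^{r\times n}$ of rank $r$ and ordered $r$-subsets $T,T'$ of $\{1,\dots,n\}$ such that $A[:,T]$ is a local minimizer for the 1-norm of the inverse on the set of $r\times r$ nonsingular submatrices of $A$, $A[:,T']$ is nonsingular, and $\|A[:,T]^{-1}\|_1\ge K\,\|A[:,T']^{-1}\|_1$.
   Context: $A[:,T]$ is the submatrix of $A$ formed by the columns indexed by $T$. $\|X\|_1=\sum_{i,j}|X_{ij}|$. For a full row rank $r\times n$ matrix $A$, a nonsingular submatrix $A[:,T]$ is a local minimizer for the 1-norm of the inverse on the set of $r\times r$ nonsingular submatrices of $A$ if $\|A[:,T]^{-1}\|_1$ cannot be decreased by swapping an element of $T$ with an element of its complement in $\{1,\dots,n\}$ (among swaps yielding a nonsingular submatrix). For any $T'$ with $A[:,T']$ nonsingular, placing $A[:,T']^{-1}$ in rows $T'$ and zeros elsewhere gives a matrix $H$ with $AH=I_r$, so the conclusion shows the ratio of the local-search output's 1-norm to the optimum is unbounded. *)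

theory Defs
  imports Complex_Main "Jordan_Normal_Form.DL_Rank" "Jordan_Normal_Form.Gauss_Jordan_Elimination"
          "Jordan_Normal_Form.Determinant"
begin

definition col_submat :: "real mat \<Rightarrow> nat list \<Rightarrow> real mat" where
  "col_submat A T = mat (dim_row A) (length T) (\<lambda>(i,j). A $$ (i, T ! j))"

definition norm1_mat :: "real mat \<Rightarrow> real" where
  "norm1_mat X = (\<Sum>i<dim_row X. \<Sum>j<dim_col X. \<bar>X $$ (i,j)\<bar>)"

text \<open>Inverse of a square matrix (meaningful when it is nonsingular).\<close>
definition inv_mat :: "real mat \<Rightarrow> real mat" where
  "inv_mat C = the (mat_inverse C)"

definition ordered_subset :: "nat \<Rightarrow> nat \<Rightarrow> nat list \<Rightarrow> bool" where
  "ordered_subset r n T \<longleftrightarrow> length T = r \<and> distinct T \<and> set T \<subseteq> {0..<n}"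

definition local_min_inv_norm1 :: "real mat \<Rightarrow> nat list \<Rightarrow> bool" where
  "local_min_inv_norm1 A T \<longleftrightarrow>
     det (col_submat A T) \<noteq> 0 \<and>
     (\<forall>k < length T. \<forall>j \<in> {0..<dim_col A} - set T.
        det (col_submat A (T[k := j])) \<noteq> 0 \<longrightarrow>
        norm1_mat (inv_mat (col_submat A T)) \<le> norm1_mat (inv_mat (col_submat A (T[k := j]))))"

end

theory Submission
  imports Defs
begin

text \<open>The witness is \<open>A = trap_mat r n M = [I | M G | 0]\<close>, where the columns of
  \<open>G = cyc_diff_mat r\<close> are \<open>e\<^sub>m - e\<^sub>m\<^sub>+\<^sub>1\<close> and \<open>e\<^sub>r\<^sub>-\<^sub>1 + e\<^sub>0\<close>, so that \<open>G\<inverse>\<close> is half the sign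
  matrix \<open>(if l \<le> i then 1 else -1)\<close>. The inverse of \<open>M G\<close> has 1-norm \<open>r\<^sup>2/(2M)\<close>, which is
  arbitrarily small, while \<open>I\<close>, with inverse of 1-norm \<open>r\<close>, is a local minimizer: every
  column of \<open>A\<close> outside \<open>I\<close> is zero or has two entries of equal magnitude, and inverting
  the identity with column \<open>k\<close> replaced by such a column produces an entry of modulus 1
  in column \<open>k\<close>, next to the \<open>r - 1\<close> unit columns that stay untouched.\<close>

lemma inv_mat_inverse:
  fixes C :: "real mat"
  assumes C: "C \<in> carrier_mat m m" and "det C \<noteq> 0"
  shows "C * inv_mat C = 1\<^sub>m m" "inv_mat C * C = 1\<^sub>m m" "inv_mat C \<in> carrier_mat m m"
proof -
  have "C \<in> Units (ring_mat TYPE(real) m ())"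
    using det_non_zero_imp_unit[OF C \<open>det C \<noteq> 0\<close>] .
  then obtain B where B: "mat_inverse C = Some B"
    using mat_inverse(1)[OF C, where b="()"] by (cases "mat_inverse C") auto
  then have "inv_mat C = B" unfolding inv_mat_def by simp
  then show "C * inv_mat C = 1\<^sub>m m" "inv_mat C * C = 1\<^sub>m m" "inv_mat C \<in> carrier_mat m m"
    using mat_inverse(2)[OF C B] by auto
qed

lemma inv_mat_eqI:
  fixes C B :: "real mat"
  assumes C: "C \<in> carrier_mat m m" and B: "B \<in> carrier_mat m m" and CB: "C * B = 1\<^sub>m m"
  shows "det C \<noteq> 0" "inv_mat C = B"
proof -
  have "det C * det B = 1" using det_mult[OF C B] CB by simp
  then show detC: "det C \<noteq> 0" by auto
  note inv = inv_mat_inverse[OF C detC]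
  have "inv_mat C = inv_mat C * (C * B)" using inv(3) CB by simp
  also have "\<dots> = (inv_mat C * C) * B" using inv(3) C B by (simp add: assoc_mult_mat)
  also have "\<dots> = B" using inv(2) B by simp
  finally show "inv_mat C = B" .
qed

lemma inv_mat_one: "inv_mat (1\<^sub>m m) = 1\<^sub>m m"
  using inv_mat_eqI(2)[of "1\<^sub>m m" m "1\<^sub>m m"] by simp

lemma norm1_mat_one: "norm1_mat (1\<^sub>m m) = real m"
proof -
  have "norm1_mat (1\<^sub>m m) = (\<Sum>i<m. \<Sum>j<m. if j = i then 1 else 0)"
    unfolding norm1_mat_def by (intro sum.cong) auto
  then show ?thesis by simp
qed

lemma norm1_mat_smult: "norm1_mat (c \<cdot>\<^sub>m X) = \<bar>c\<bar> * norm1_mat X"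
  unfolding norm1_mat_def by (simp add: sum_distrib_left abs_mult)

lemma norm1_mat_ge_dim_col:
  assumes "\<And>j. j < dim_col X \<Longrightarrow> 1 \<le> (\<Sum>i<dim_row X. \<bar>X $$ (i,j)\<bar>)"
  shows "real (dim_col X) \<le> norm1_mat X"
proof -
  have "real (dim_col X) = (\<Sum>j<dim_col X. 1)" by simp
  also have "\<dots> \<le> (\<Sum>j<dim_col X. \<Sum>i<dim_row X. \<bar>X $$ (i,j)\<bar>)"
    by (rule sum_mono) (use assms in auto)
  also have "\<dots> = norm1_mat X"
    unfolding norm1_mat_def by (rule sum.swap)
  finally show ?thesis .
qed

lemma (in vec_space) rank_le_dim:
  assumes A: "A \<in> carrier_mat n nc"
  shows "rank A \<le> n"
proof -
  have "set (cols A) \<subseteq> carrier_vec n" using A cols_dim by blast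
  then have "subspace class_ring (span (set (cols A))) V"
    using span_is_subspace by auto
  then have "vectorspace.dim class_ring (vs (span (set (cols A)))) \<le> dim"
    using subspace_dim fin_dim_span_cols[OF A] by auto
  then show ?thesis unfolding rank_def dim_is_n by simp
qed

lemma (in vec_space) rank_eq_if_unit_cols:
  assumes A: "A \<in> carrier_mat n nc" and n: "n \<le> nc"
    and unit: "\<And>i. i < n \<Longrightarrow> col A i = unit_vec n i"
  shows "rank A = n"
proof (rule antisym)
  show "rank A \<le> n" using rank_le_dim[OF A] .
  have "set (unit_vecs n) \<subseteq> set (cols A)"
  proof
    fix v :: "'a vec" assume "v \<in> set (unit_vecs n)"
    then obtain i where i: "i < n" and v: "v = unit_vec n i" unfolding unit_vecs_def by auto
    have "cols A ! i \<in> set (cols A)" using i A n by (intro nth_mem) auto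
    then show "v \<in> set (cols A)" using unit[OF i] i A n v by auto
  qed
  moreover have "lin_indpt (set (unit_vecs n))"
    using unit_vecs_basis unfolding basis_def by blast
  moreover have "card (set (unit_vecs n :: 'a vec list)) = n"
    using distinct_card[OF unit_vecs_distinct] by simp
  ultimately show "n \<le> rank A" using rank_ge_card_indpt[OF A] by metis
qed

lemma left_inverse_of_col_update:
  fixes B C :: "real mat"
  assumes C: "C \<in> carrier_mat r r" and B: "B \<in> carrier_mat r r" and BC: "B * C = 1\<^sub>m r"
    and k: "k < r"
    and C_id: "\<And>i p. i < r \<Longrightarrow> p < r \<Longrightarrow> p \<noteq> k \<Longrightarrow> C $$ (i,p) = (if i = p then 1 else 0)"
  shows "i < r \<Longrightarrow> p < r \<Longrightarrow> p \<noteq> k \<Longrightarrow> B $$ (i,p) = (if i = p then 1 else 0)"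
    and "i < r \<Longrightarrow> B $$ (i,k) * C $$ (k,k) = (if i = k then 1 else - C $$ (i,k))"
proof -
  have BC_entry: "(\<Sum>q<r. B $$ (i,q) * C $$ (q,p)) = (if i = p then 1 else 0)"
    if "i < r" "p < r" for i p
  proof -
    have "(B * C) $$ (i,p) = (\<Sum>q<r. B $$ (i,q) * C $$ (q,p))"
      using that B C by (simp add: scalar_prod_def lessThan_atLeast0)
    then show ?thesis using BC that by simp
  qed
  have B_id: "B $$ (i,p) = (if i = p then 1 else 0)" if "i < r" "p < r" "p \<noteq> k" for i p
  proof -
    have "(\<Sum>q<r. B $$ (i,q) * C $$ (q,p)) = (\<Sum>q<r. if q = p then B $$ (i,q) else 0)"
      by (rule sum.cong) (use C_id that in auto)
    then show ?thesis using BC_entry[OF that(1,2)] that by simp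
  qed
  then show "i < r \<Longrightarrow> p < r \<Longrightarrow> p \<noteq> k \<Longrightarrow> B $$ (i,p) = (if i = p then 1 else 0)" .
  show "B $$ (i,k) * C $$ (k,k) = (if i = k then 1 else - C $$ (i,k))" if i: "i < r"
  proof -
    have "(\<Sum>q<r. B $$ (i,q) * C $$ (q,k))
        = (\<Sum>q<r. (if q = k then B $$ (i,k) * C $$ (k,k) else 0)
                 + (if q = i \<and> i \<noteq> k then C $$ (i,k) else 0))"
      by (rule sum.cong) (use B_id[OF i] in auto)
    also have "\<dots> = B $$ (i,k) * C $$ (k,k) + (if i \<noteq> k then C $$ (i,k) else 0)"
      using i k by (simp add: sum.distrib)
    finally show ?thesis using BC_entry[OF i k] by (auto simp: algebra_simps)
  qed
qed

lemma norm1_left_inverse_of_col_update_ge: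
  fixes B C :: "real mat"
  assumes C: "C \<in> carrier_mat r r" and B: "B \<in> carrier_mat r r" and BC: "B * C = 1\<^sub>m r"
    and k: "k < r"
    and C_id: "\<And>i p. i < r \<Longrightarrow> p < r \<Longrightarrow> p \<noteq> k \<Longrightarrow> C $$ (i,p) = (if i = p then 1 else 0)"
    and partner: "C $$ (k,k) \<noteq> 0 \<Longrightarrow> \<exists>k'<r. k' \<noteq> k \<and> \<bar>C $$ (k',k)\<bar> = \<bar>C $$ (k,k)\<bar>"
  shows "real r \<le> norm1_mat B"
proof -
  have B_id: "B $$ (i,p) = (if i = p then 1 else 0)" if "i < r" "p < r" "p \<noteq> k" for i p
    using left_inverse_of_col_update(1)[OF C B BC k] C_id that by blast
  have B_col: "B $$ (i,k) * C $$ (k,k) = (if i = k then 1 else - C $$ (i,k))" if "i < r" for i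
    using left_inverse_of_col_update(2)[OF C B BC k] C_id that by blast
  have pivot: "C $$ (k,k) \<noteq> 0" using B_col[OF k] by auto
  then obtain k' where k': "k' < r" "k' \<noteq> k" "\<bar>C $$ (k',k)\<bar> = \<bar>C $$ (k,k)\<bar>"
    using partner by blast
  have "\<bar>B $$ (k',k)\<bar> * \<bar>C $$ (k,k)\<bar> = \<bar>C $$ (k,k)\<bar>"
    using B_col[OF k'(1)] k'(2,3) by (metis abs_minus_cancel abs_mult)
  then have B_k'k: "\<bar>B $$ (k',k)\<bar> = 1" using pivot by simp
  have "1 \<le> (\<Sum>i<r. \<bar>B $$ (i,p)\<bar>)" if p: "p < r" for p
  proof -
    define i where "i = (if p = k then k' else p)"
    have "\<bar>B $$ (i,p)\<bar> \<le> (\<Sum>i<r. \<bar>B $$ (i,p)\<bar>)"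
      by (rule member_le_sum) (use k' p in \<open>auto simp: i_def\<close>)
    moreover have "\<bar>B $$ (i,p)\<bar> = 1" using B_k'k B_id[OF p p] p by (auto simp: i_def)
    ultimately show ?thesis by simp
  qed
  then show ?thesis using norm1_mat_ge_dim_col[of B] B by auto
qed

definition cyc_diff_mat :: "nat \<Rightarrow> real mat" where
  "cyc_diff_mat r = mat r r (\<lambda>(i,m).
     (if i = m then 1 else 0) - (if i = Suc m then 1 else 0) + (if i = 0 \<and> m = r - 1 then 1 else 0))"

definition sign_mat :: "nat \<Rightarrow> real mat" where
  "sign_mat r = mat r r (\<lambda>(i,l). if l \<le> i then 1 else -1)"

lemma cyc_diff_mat_carrier [simp]: "cyc_diff_mat r \<in> carrier_mat r r"
  unfolding cyc_diff_mat_def by simp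

lemma sign_mat_carrier [simp]: "sign_mat r \<in> carrier_mat r r"
  unfolding sign_mat_def by simp

lemma cyc_diff_mat_mult_sign_mat:
  assumes r: "r \<ge> 2"
  shows "cyc_diff_mat r * sign_mat r = 2 \<cdot>\<^sub>m 1\<^sub>m r"
proof (rule eq_matI)
  fix i l assume "i < dim_row (2 \<cdot>\<^sub>m 1\<^sub>m r :: real mat)" "l < dim_col (2 \<cdot>\<^sub>m 1\<^sub>m r :: real mat)"
  then have i: "i < r" and l: "l < r" by auto
  define G where "G = (\<lambda>m. cyc_diff_mat r $$ (i,m))"
  define H where "H = (\<lambda>m. sign_mat r $$ (m,l))"
  have "(cyc_diff_mat r * sign_mat r) $$ (i,l) = (\<Sum>m<r. G m * H m)"
    using i l by (simp add: cyc_diff_mat_def sign_mat_def G_def H_def scalar_prod_def lessThan_atLeast0)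
  also have "\<dots> = (if i = 0 then H 0 + H (r - 1) else H i - H (i - 1))"
  proof (cases i)
    case 0
    have "(\<Sum>m<r. G m * H m) = (\<Sum>m<r. (if m = 0 then H m else 0) + (if m = r - 1 then H m else 0))"
      by (rule sum.cong) (use 0 r in \<open>auto simp: G_def cyc_diff_mat_def\<close>)
    then show ?thesis using 0 r by (simp add: sum.distrib)
  next
    case (Suc i')
    have "(\<Sum>m<r. G m * H m) = (\<Sum>m<r. (if m = i then H m else 0) - (if m = i' then H m else 0))"
      by (rule sum.cong) (use Suc i in \<open>auto simp: G_def cyc_diff_mat_def\<close>)
    then show ?thesis using Suc i by (simp add: sum_subtractf)
  qed
  also have "\<dots> = (2 \<cdot>\<^sub>m 1\<^sub>m r) $$ (i,l)"
    using i l r by (auto simp: H_def sign_mat_def)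
  finally show "(cyc_diff_mat r * sign_mat r) $$ (i,l) = (2 \<cdot>\<^sub>m 1\<^sub>m r) $$ (i,l)" .
qed (auto simp: cyc_diff_mat_def sign_mat_def)

lemma norm1_sign_mat: "norm1_mat (sign_mat r) = real r * real r"
proof -
  have "norm1_mat (sign_mat r) = (\<Sum>i<r. \<Sum>l<r. 1)"
    unfolding norm1_mat_def sign_mat_def by (intro sum.cong) auto
  then show ?thesis by simp
qed

lemma cyc_diff_mat_partner:
  assumes r: "r \<ge> 2" and k: "k < r" and m: "m < r" and nz: "cyc_diff_mat r $$ (k,m) \<noteq> 0"
  shows "\<exists>k'<r. k' \<noteq> k \<and> \<bar>cyc_diff_mat r $$ (k',m)\<bar> = \<bar>cyc_diff_mat r $$ (k,m)\<bar>"
proof (cases "m = r - 1")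
  case True
  then have G: "\<And>i. i < r \<Longrightarrow> cyc_diff_mat r $$ (i,m) = (if i = r - 1 \<or> i = 0 then 1 else 0)"
    using r by (auto simp: cyc_diff_mat_def)
  show ?thesis
    using G[OF k] G[of 0] G[of "r - 1"] nz k r
    by (intro exI[of _ "if k = 0 then r - 1 else 0"]) (auto split: if_splits)
next
  case False
  then have G: "\<And>i. i < r \<Longrightarrow> cyc_diff_mat r $$ (i,m) = (if i = m then 1 else if i = Suc m then -1 else 0)"
    using m by (auto simp: cyc_diff_mat_def)
  show ?thesis
    using G[OF k] G[of m] G[of "Suc m"] nz k m False
    by (intro exI[of _ "if k = m then Suc m else m"]) (auto split: if_splits)
qed

lemma smult_cyc_diff_mat_inverse:
  assumes r: "r \<ge> 2" and M: "M \<noteq> 0"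
  shows "det (M \<cdot>\<^sub>m cyc_diff_mat r) \<noteq> 0"
    and "inv_mat (M \<cdot>\<^sub>m cyc_diff_mat r) = (1 / (2 * M)) \<cdot>\<^sub>m sign_mat r"
proof -
  have "(M \<cdot>\<^sub>m cyc_diff_mat r) * ((1 / (2 * M)) \<cdot>\<^sub>m sign_mat r)
      = M \<cdot>\<^sub>m (cyc_diff_mat r * ((1 / (2 * M)) \<cdot>\<^sub>m sign_mat r))"
    by (rule mult_smult_assoc_mat[of _ r r _ r]) simp_all
  also have "\<dots> = M \<cdot>\<^sub>m ((1 / (2 * M)) \<cdot>\<^sub>m (cyc_diff_mat r * sign_mat r))"
    by (simp add: mult_smult_distrib[OF cyc_diff_mat_carrier sign_mat_carrier])
  also have "\<dots> = 1\<^sub>m r"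
    unfolding cyc_diff_mat_mult_sign_mat[OF r] using M by (auto intro!: eq_matI)
  finally show "det (M \<cdot>\<^sub>m cyc_diff_mat r) \<noteq> 0"
    and "inv_mat (M \<cdot>\<^sub>m cyc_diff_mat r) = (1 / (2 * M)) \<cdot>\<^sub>m sign_mat r"
    using inv_mat_eqI[OF smult_carrier_mat[OF cyc_diff_mat_carrier]
        smult_carrier_mat[OF sign_mat_carrier]] by blast+
qed

definition trap_mat :: "nat \<Rightarrow> nat \<Rightarrow> real \<Rightarrow> real mat" where
  "trap_mat r n M = mat r n (\<lambda>(i,j).
     if j < r then (if i = j then 1 else 0)
     else if j < 2 * r then M * cyc_diff_mat r $$ (i, j - r) else 0)"

lemma trap_mat_carrier: "trap_mat r n M \<in> carrier_mat r n"
  unfolding trap_mat_def by simp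

lemma rank_trap_mat:
  assumes "r \<le> n"
  shows "vec_space.rank r (trap_mat r n M) = r"
  by (rule vec_space.rank_eq_if_unit_cols[OF trap_mat_carrier])
    (use assms in \<open>auto intro!: eq_vecI simp: trap_mat_def\<close>)

lemma col_submat_trap_mat_identity:
  assumes "r \<le> n"
  shows "col_submat (trap_mat r n M) [0..<r] = 1\<^sub>m r"
  by (rule eq_matI) (use assms in \<open>auto simp: col_submat_def trap_mat_def\<close>)

lemma col_submat_trap_mat_cyc_diff:
  assumes "2 * r \<le> n"
  shows "col_submat (trap_mat r n M) [r..<2*r] = M \<cdot>\<^sub>m cyc_diff_mat r"
  by (rule eq_matI) (use assms in \<open>auto simp: col_submat_def trap_mat_def cyc_diff_mat_def\<close>)

lemma local_min_trap_mat:
  assumes r: "r \<ge> 2" and n: "r \<le> n"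
  shows "local_min_inv_norm1 (trap_mat r n M) [0..<r]"
  unfolding local_min_inv_norm1_def col_submat_trap_mat_identity[OF n] inv_mat_one norm1_mat_one
proof (intro conjI allI impI ballI)
  fix k j assume "k < length [0..<r]" and j: "j \<in> {0..<dim_col (trap_mat r n M)} - set [0..<r]"
    and det: "det (col_submat (trap_mat r n M) ([0..<r][k := j])) \<noteq> 0"
  then have k: "k < r" and j: "r \<le> j" "j < n" by (auto simp: trap_mat_def)
  define C where "C = col_submat (trap_mat r n M) ([0..<r][k := j])"
  have C: "C \<in> carrier_mat r r" unfolding C_def col_submat_def trap_mat_def by simp
  have C_entry: "C $$ (i,p) = (if p = k then trap_mat r n M $$ (i,j) else if i = p then 1 else 0)"
    if "i < r" "p < r" for i p
    using that k j unfolding C_def col_submat_def by (auto simp: trap_mat_def)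
  note inv = inv_mat_inverse[OF C det[folded C_def]]
  show "real r \<le> norm1_mat (inv_mat C)"
  proof (rule norm1_left_inverse_of_col_update_ge[OF C inv(3) inv(2) k])
    show "C $$ (i,p) = (if i = p then 1 else 0)" if "i < r" "p < r" "p \<noteq> k" for i p
      using C_entry that by simp
  next
    assume nz: "C $$ (k,k) \<noteq> 0"
    have j_lt: "j < 2 * r"
      using C_entry[OF k k] j k nz by (auto simp: trap_mat_def split: if_splits)
    have C_col: "C $$ (i,k) = M * cyc_diff_mat r $$ (i, j - r)" if "i < r" for i
      using C_entry[OF that k] j j_lt that by (simp add: trap_mat_def)
    have "cyc_diff_mat r $$ (k, j - r) \<noteq> 0" using nz C_col[OF k] by simp
    then obtain k' where "k' < r" "k' \<noteq> k"
        "\<bar>cyc_diff_mat r $$ (k', j - r)\<bar> = \<bar>cyc_diff_mat r $$ (k, j - r)\<bar>"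
      using cyc_diff_mat_partner[OF r k] j_lt by (metis less_diff_conv2 j(1) mult_2)
    then show "\<exists>k'<r. k' \<noteq> k \<and> \<bar>C $$ (k',k)\<bar> = \<bar>C $$ (k,k)\<bar>"
      using C_col k by (intro exI[of _ k']) (auto simp: abs_mult)
  qed
qed simp

theorem theorem6p5:
  fixes r n :: nat and K :: real
  assumes "r \<ge> 2" and "n \<ge> 2 * r" and "K > 0"
  shows "\<exists>A T T'. A \<in> carrier_mat r n \<and> vec_space.rank r A = r \<and>
           ordered_subset r n T \<and> ordered_subset r n T' \<and>
           local_min_inv_norm1 A T \<and> det (col_submat A T') \<noteq> 0 \<and>
           norm1_mat (inv_mat (col_submat A T)) \<ge> K * norm1_mat (inv_mat (col_submat A T'))"
proof -
  define M where "M = K * real r"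
  define A where "A = trap_mat r n M"
  have M: "M > 0" and rn: "r \<le> n" using assms by (simp_all add: M_def)
  note T'_inverse = smult_cyc_diff_mat_inverse[OF assms(1) less_imp_neq[OF M, symmetric]]
  have T': "col_submat A [r..<2*r] = M \<cdot>\<^sub>m cyc_diff_mat r"
    unfolding A_def using col_submat_trap_mat_cyc_diff assms(2) .
  have "norm1_mat (inv_mat (col_submat A [0..<r])) = real r"
    unfolding A_def col_submat_trap_mat_identity[OF rn] inv_mat_one norm1_mat_one ..
  moreover have "norm1_mat (inv_mat (col_submat A [r..<2*r])) = real r * real r / (2 * M)"
    unfolding T' T'_inverse(2) using M by (simp add: norm1_mat_smult norm1_sign_mat)
  ultimately have "K * norm1_mat (inv_mat (col_submat A [r..<2*r]))
      \<le> norm1_mat (inv_mat (col_submat A [0..<r]))"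
    using assms by (simp add: M_def field_simps)
  moreover have "ordered_subset r n [0..<r]" "ordered_subset r n [r..<2*r]"
    using assms(2) by (auto simp: ordered_subset_def)
  moreover have "A \<in> carrier_mat r n" "vec_space.rank r A = r" "local_min_inv_norm1 A [0..<r]"
    unfolding A_def using trap_mat_carrier rank_trap_mat[OF rn] local_min_trap_mat[OF assms(1) rn] .
  ultimately show ?thesis
    using T'_inverse(1) unfolding T'[symmetric] by blast
qed

end
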